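(* For $n\ge0$ let $\mathcal{M}_n$ be the set of perfect matchings of $[2n]$. Then $$\sum_{n\ge0}\sum_{M\in\mathcal{M}_n} r^{c(M)}s^{p(M)}t^{\mathrm{da}(M)}\frac{x^n}{n!}=\frac{e^{(r-t)x+(s-t^2)x^2}}{\sqrt{1-2tx}}.$$
   Context: $[2n]=\{1,\dots,2n\}$. For $A\subseteq[2n]$ let $\overline{A}=\{2n+1-i: i\in A\}$. An arc $\{i,j\}$ of $M\in\mathcal{M}_n$ is centered if $\overline{\{i,j\}}=\{i,j\}$; coupled if it is not centered but $\overline{\{i,j\}}\in M$ (then $\{i,j\},\overline{\{i,j\}}$ form a pair of coupled arcs); asymmetric otherwise. $c(M)$ is the number of centered arcs, $p(M)$ the number of pairs of coupled arcs, and $\mathrm{da}(M)$ the number of asymmetric arcs. *)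

theory Defs
  imports "HOL-Computational_Algebra.Formal_Power_Series"
begin

definition perfect_matchings :: "nat \<Rightarrow> nat set set set" where
  "perfect_matchings n =
     {M. (\<forall>e\<in>M. e \<subseteq> {1..2*n} \<and> card e = 2) \<and> (\<forall>x\<in>{1..2*n}. \<exists>!e. e \<in> M \<and> x \<in> e)}"

definition refl_set :: "nat \<Rightarrow> nat set \<Rightarrow> nat set" where
  "refl_set n A = (\<lambda>i. 2*n + 1 - i) ` A"

definition centered_arcs :: "nat \<Rightarrow> nat set set \<Rightarrow> nat set set" where
  "centered_arcs n M = {e \<in> M. refl_set n e = e}"

definition coupled_arcs :: "nat \<Rightarrow> nat set set \<Rightarrow> nat set set" where
  "coupled_arcs n M = {e \<in> M. refl_set n e \<noteq> e \<and> refl_set n e \<in> M}"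

definition asymmetric_arcs :: "nat \<Rightarrow> nat set set \<Rightarrow> nat set set" where
  "asymmetric_arcs n M = {e \<in> M. refl_set n e \<notin> M}"

definition cnum :: "nat \<Rightarrow> nat set set \<Rightarrow> nat" where
  "cnum n M = card (centered_arcs n M)"

definition pnum :: "nat \<Rightarrow> nat set set \<Rightarrow> nat" where
  "pnum n M = card (coupled_arcs n M) div 2"

definition danum :: "nat \<Rightarrow> nat set set \<Rightarrow> nat" where
  "danum n M = card (asymmetric_arcs n M)"

end

(*
  Write W(X) for the weighted sum over the perfect matchings of a set X that is closed under
  the reflection a' = 2N + 1 - a, and split the matchings according to the partner u of a
  point a. If u = a', the arc is centred and contributes r W(X - {a, a'}). Otherwise split
  further by the partner v of a': for v = u' the two arcs are coupled and contribute
  s W(X - {a, a', u, u'}); for any other v both arcs are asymmetric and contribute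
  t^2 W(X - {a, a', u, v}). That last set is not closed under the reflection, but the sum of
  these terms over v is recovered from the same decomposition of X - {a, a'} at u.
  By induction, W(X) = w(|X| / 2) for the sequence with w(0) = 1 and
    w(m + 1) = (r + 2mt) w(m) + 2m(s - rt) w(m - 1) + 4m(m - 1) t (t^2 - s) w(m - 2).
  The right-hand side F of the theorem satisfies
    (1 - 2tx) F' = (r + 2(s - rt) x + 4t(t^2 - s) x^2) F,
  which says that n! [x^n] F satisfies the same recurrence.
*)

theory Submission
  imports Defs
begin

unbundle fps_syntax

section \<open>Perfect matchings of a finite set\<close>

definition perfect_matchings_on :: "'a set \<Rightarrow> 'a set set set" where
  "perfect_matchings_on X =
     {M. (\<forall>e\<in>M. e \<subseteq> X \<and> card e = 2) \<and> (\<forall>x\<in>X. \<exists>!e. e \<in> M \<and> x \<in> e)}"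

lemma perfect_matchings_eq_on: "perfect_matchings n = perfect_matchings_on {1..2*n}"
  by (simp add: perfect_matchings_def perfect_matchings_on_def)

lemma perfect_matchings_onI:
  "(\<And>e. e \<in> M \<Longrightarrow> e \<subseteq> X \<and> card e = 2) \<Longrightarrow> (\<And>x. x \<in> X \<Longrightarrow> \<exists>!e. e \<in> M \<and> x \<in> e)
    \<Longrightarrow> M \<in> perfect_matchings_on X"
  by (simp add: perfect_matchings_on_def)

lemma perfect_matching_on_arcD:
  "M \<in> perfect_matchings_on X \<Longrightarrow> e \<in> M \<Longrightarrow> e \<subseteq> X \<and> card e = 2"
  by (simp add: perfect_matchings_on_def)

lemma perfect_matching_on_cover:
  "M \<in> perfect_matchings_on X \<Longrightarrow> x \<in> X \<Longrightarrow> \<exists>!e. e \<in> M \<and> x \<in> e"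
  by (simp add: perfect_matchings_on_def)

lemma perfect_matchings_on_empty [simp]: "perfect_matchings_on {} = {{}}"
  by (auto simp: perfect_matchings_on_def)

lemma finite_perfect_matchings_on: "finite X \<Longrightarrow> finite (perfect_matchings_on X)"
  by (rule finite_subset[of _ "Pow (Pow X)"]) (auto simp: perfect_matchings_on_def)

lemma perfect_matching_on_Union_subset: "M \<in> perfect_matchings_on X \<Longrightarrow> \<Union>M \<subseteq> X"
  using perfect_matching_on_arcD by blast

lemma finite_perfect_matching_on: "finite X \<Longrightarrow> M \<in> perfect_matchings_on X \<Longrightarrow> finite M"
  by (meson finite_Pow_iff finite_UnionD finite_subset perfect_matching_on_Union_subset)

lemma perfect_matching_on_arc_nonempty: "M \<in> perfect_matchings_on X \<Longrightarrow> e \<in> M \<Longrightarrow> e \<noteq> {}"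
  using perfect_matching_on_arcD by fastforce

lemma perfect_matching_on_arc_unique:
  assumes M: "M \<in> perfect_matchings_on X" and "e \<in> M" "e' \<in> M" "x \<in> e" "x \<in> e'"
  shows "e = e'"
proof -
  have "x \<in> X"
    using perfect_matching_on_arcD[OF M] assms(2,4) by blast
  then show ?thesis
    using perfect_matching_on_cover[OF M] assms(2-5) by blast
qed

lemma perfect_matching_on_partnerD:
  assumes "M \<in> perfect_matchings_on X" "{x, u} \<in> M"
  shows "u \<noteq> x" "x \<in> X" "u \<in> X"
  using perfect_matching_on_arcD[OF assms] by (auto simp: card_2_iff)

lemma perfect_matching_on_partner:
  assumes M: "M \<in> perfect_matchings_on X" and x: "x \<in> X"
  shows "\<exists>!u. {x, u} \<in> M"
proof -
  obtain e where e: "e \<in> M" "x \<in> e"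
    using perfect_matching_on_cover[OF M x] by blast
  moreover obtain a b where "e = {a, b}"
    using perfect_matching_on_arcD[OF M e(1)] by (auto simp: card_2_iff)
  ultimately obtain u where u: "e = {x, u}"
    by auto
  show ?thesis
  proof
    show "{x, u} \<in> M"
      using e u by simp
    show "v = u" if "{x, v} \<in> M" for v
      using perfect_matching_on_arc_unique[OF M that e(1)] u by (auto simp: doubleton_eq_iff)
  qed
qed

lemma perfect_matching_on_Un:
  assumes M: "M \<in> perfect_matchings_on X" and M': "M' \<in> perfect_matchings_on X'"
    and disj: "X \<inter> X' = {}"
  shows "M \<union> M' \<in> perfect_matchings_on (X \<union> X')"
proof (rule perfect_matchings_onI)
  show "e \<subseteq> X \<union> X' \<and> card e = 2" if "e \<in> M \<union> M'" for e
    using that perfect_matching_on_arcD[OF M] perfect_matching_on_arcD[OF M'] by blast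
  show "\<exists>!e. e \<in> M \<union> M' \<and> x \<in> e" if x: "x \<in> X \<union> X'" for x
  proof (cases "x \<in> X")
    case True
    then have "\<forall>e\<in>M'. x \<notin> e"
      using perfect_matching_on_Union_subset[OF M'] disj by blast
    then have "(\<lambda>e. e \<in> M \<union> M' \<and> x \<in> e) = (\<lambda>e. e \<in> M \<and> x \<in> e)"
      by auto
    then show ?thesis
      using perfect_matching_on_cover[OF M True] by simp
  next
    case False
    then have "\<forall>e\<in>M. x \<notin> e"
      using perfect_matching_on_Union_subset[OF M] by blast
    then have "(\<lambda>e. e \<in> M \<union> M' \<and> x \<in> e) = (\<lambda>e. e \<in> M' \<and> x \<in> e)"
      by auto
    then show ?thesis
      using perfect_matching_on_cover[OF M'] False x by simp
  qed
qed

lemma perfect_matching_on_Diff: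
  assumes M: "M \<in> perfect_matchings_on X" and EM: "E \<subseteq> M" and E: "E \<in> perfect_matchings_on B"
  shows "M - E \<in> perfect_matchings_on (X - B)"
proof (rule perfect_matchings_onI)
  fix e
  assume e: "e \<in> M - E"
  have "y \<notin> e" if "y \<in> B" for y
  proof
    assume "y \<in> e"
    obtain e' where "e' \<in> E" "y \<in> e'"
      using perfect_matching_on_cover[OF E \<open>y \<in> B\<close>] by blast
    then show False
      using perfect_matching_on_arc_unique[OF M, of e e' y] e EM \<open>y \<in> e\<close> by blast
  qed
  then show "e \<subseteq> X - B \<and> card e = 2"
    using perfect_matching_on_arcD[OF M] e by blast
next
  fix x
  assume x: "x \<in> X - B"
  then have "\<forall>e\<in>E. x \<notin> e"
    using perfect_matching_on_Union_subset[OF E] by blast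
  then have "(\<lambda>e. e \<in> M - E \<and> x \<in> e) = (\<lambda>e. e \<in> M \<and> x \<in> e)"
    by auto
  then show "\<exists>!e. e \<in> M - E \<and> x \<in> e"
    using perfect_matching_on_cover[OF M] x by simp
qed

lemma perfect_matching_on_doubleton: "a \<noteq> b \<Longrightarrow> {{a, b}} \<in> perfect_matchings_on {a, b}"
  by (intro perfect_matchings_onI) auto

lemma perfect_matching_on_insert:
  assumes "M \<in> perfect_matchings_on X" "a \<noteq> b" "a \<notin> X" "b \<notin> X"
  shows "insert {a, b} M \<in> perfect_matchings_on (insert a (insert b X))"
  using perfect_matching_on_Un[OF perfect_matching_on_doubleton[OF assms(2)] assms(1)] assms(3,4)
  by simp

lemma sum_perfect_matchings_on_superset:
  assumes X: "finite X" and E: "E \<in> perfect_matchings_on B" and BX: "B \<subseteq> X"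
  shows "(\<Sum>M\<in>{M \<in> perfect_matchings_on X. E \<subseteq> M}. g M)
       = (\<Sum>M\<in>perfect_matchings_on (X - B). g (E \<union> M))"
proof (rule sum.reindex_bij_witness[of _ "\<lambda>M. E \<union> M" "\<lambda>M. M - E"])
  fix M
  assume M: "M \<in> {M \<in> perfect_matchings_on X. E \<subseteq> M}"
  then show "M - E \<in> perfect_matchings_on (X - B)"
    using perfect_matching_on_Diff[OF _ _ E] by blast
  show "E \<union> (M - E) = M"
    using M by blast
  then show "g (E \<union> (M - E)) = g M"
    by simp
next
  fix M
  assume M: "M \<in> perfect_matchings_on (X - B)"
  have "M \<inter> E = {}"
    using perfect_matching_on_Union_subset[OF M] perfect_matching_on_Union_subset[OF E]
      perfect_matching_on_arc_nonempty[OF E] by blast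
  then show "E \<union> M - E = M"
    by blast
  have "E \<union> M \<in> perfect_matchings_on (B \<union> (X - B))"
    using perfect_matching_on_Un[OF E M] by blast
  then show "E \<union> M \<in> {M \<in> perfect_matchings_on X. E \<subseteq> M}"
    using BX by (simp add: Un_absorb1)
qed

lemma sum_perfect_matchings_on_by_partner:
  assumes X: "finite X" and x: "x \<in> X" and S: "S \<subseteq> perfect_matchings_on X"
  shows "sum g S = (\<Sum>u\<in>X - {x}. \<Sum>M\<in>{M \<in> S. {x, u} \<in> M}. g M)"
proof -
  have fin: "finite S"
    using finite_perfect_matchings_on[OF X] S finite_subset by blast
  have "(\<Sum>u\<in>X - {x}. if {x, u} \<in> M then g M else 0) = g M" if M: "M \<in> S" for M
  proof -
    have M: "M \<in> perfect_matchings_on X"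
      using M S by blast
    obtain u where u: "{x, u} \<in> M" and uniq: "\<forall>v. {x, v} \<in> M \<longrightarrow> v = u"
      using perfect_matching_on_partner[OF M x] by (rule ex1E)
    have "u \<in> X - {x}"
      using perfect_matching_on_partnerD(1,3)[OF M u] by blast
    moreover have "(\<Sum>v\<in>X - {x}. if {x, v} \<in> M then g M else 0)
        = (\<Sum>v\<in>X - {x}. if v = u then g M else 0)"
      using u uniq by (intro sum.cong refl) (metis (full_types))
    ultimately show ?thesis
      using X by simp
  qed
  then have "sum g S = (\<Sum>M\<in>S. \<Sum>u\<in>X - {x}. if {x, u} \<in> M then g M else 0)"
    by (simp cong: sum.cong)
  also have "\<dots> = (\<Sum>u\<in>X - {x}. \<Sum>M\<in>S. if {x, u} \<in> M then g M else 0)"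
    by (rule sum.swap)
  also have "\<dots> = (\<Sum>u\<in>X - {x}. \<Sum>M\<in>{M \<in> S. {x, u} \<in> M}. g M)"
    using fin by (simp add: sum.inter_filter)
  finally show ?thesis .
qed

section \<open>The reflection of $[2N]$\<close>

definition mirror :: "nat \<Rightarrow> nat \<Rightarrow> nat" where
  "mirror N i = 2 * N + 1 - i"

lemma refl_set_eq_image: "refl_set N A = mirror N ` A"
  by (simp add: refl_set_def mirror_def)

lemma mirror_in_range: "i \<in> {1..2*N} \<Longrightarrow> mirror N i \<in> {1..2*N}"
  by (auto simp: mirror_def)

lemma mirror_mirror [simp]: "i \<in> {1..2*N} \<Longrightarrow> mirror N (mirror N i) = i"
  by (auto simp: mirror_def)

lemma mirror_neq [simp]: "mirror N i \<noteq> i" "i \<noteq> mirror N i"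
  unfolding mirror_def by presburger+

lemma mirror_notin_pair:
  assumes "i \<in> {1..2*N}" "j \<in> {1..2*N}" "j \<notin> {i, mirror N i}"
  shows "mirror N j \<notin> {i, mirror N i}"
  using assms by (auto simp: mirror_def)

lemma mirror_eq_iff: "i \<in> {1..2*N} \<Longrightarrow> j \<in> {1..2*N} \<Longrightarrow> mirror N i = j \<longleftrightarrow> i = mirror N j"
  by (auto simp: mirror_def)

lemma refl_set_subset: "A \<subseteq> {1..2*N} \<Longrightarrow> refl_set N A \<subseteq> {1..2*N}"
  unfolding refl_set_eq_image using mirror_in_range by blast

lemma refl_set_refl_set: "A \<subseteq> {1..2*N} \<Longrightarrow> refl_set N (refl_set N A) = A"
  unfolding refl_set_eq_image image_image by (simp add: subset_iff cong: image_cong)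

lemma refl_set_eq_iff:
  "A \<subseteq> {1..2*N} \<Longrightarrow> B \<subseteq> {1..2*N} \<Longrightarrow> refl_set N A = B \<longleftrightarrow> A = refl_set N B"
  using refl_set_refl_set by metis

lemma refl_set_doubleton [simp]: "refl_set N {a, b} = {mirror N a, mirror N b}"
  by (simp add: refl_set_eq_image)

definition mirror_closed :: "nat \<Rightarrow> nat set \<Rightarrow> bool" where
  "mirror_closed N X \<longleftrightarrow> X \<subseteq> {1..2*N} \<and> (\<forall>x\<in>X. mirror N x \<in> X)"

lemma mirror_closed_range: "mirror_closed N {1..2*N}"
  unfolding mirror_closed_def using mirror_in_range by blast

lemma mirror_closed_Diff_pair:
  assumes "mirror_closed N X" "a \<in> X"
  shows "mirror_closed N (X - {a, mirror N a})"
  unfolding mirror_closed_def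
proof (intro conjI ballI)
  show "X - {a, mirror N a} \<subseteq> {1..2*N}"
    using assms(1) by (auto simp: mirror_closed_def)
  fix x
  assume x: "x \<in> X - {a, mirror N a}"
  have range: "x \<in> {1..2*N}" "a \<in> {1..2*N}" and "mirror N x \<in> X"
    using assms x by (auto simp: mirror_closed_def)
  moreover have "mirror N x \<noteq> a"
    using x mirror_eq_iff[OF range] by auto
  moreover have "mirror N x \<noteq> mirror N a"
    using x mirror_mirror[OF range(1)] mirror_mirror[OF range(2)] by (metis DiffD2 insertI1)
  ultimately show "mirror N x \<in> X - {a, mirror N a}"
    by blast
qed

lemma finite_mirror_closed: "mirror_closed N X \<Longrightarrow> finite X"
  unfolding mirror_closed_def using finite_subset by blast

lemma card_mirror_closed_Diff_pair:
  assumes "mirror_closed N X" "a \<in> X"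
  shows "card X = card (X - {a, mirror N a}) + 2"
proof -
  have "{a, mirror N a} \<subseteq> X" "card {a, mirror N a} = 2"
    using assms by (auto simp: mirror_closed_def)
  then show ?thesis
    using card_Diff_subset[of "{a, mirror N a}" X] card_mono[of X "{a, mirror N a}"]
      finite_mirror_closed[OF assms(1)] by simp
qed

lemma even_card_mirror_closed: "mirror_closed N X \<Longrightarrow> even (card X)"
proof (induction "card X" arbitrary: X rule: less_induct)
  case less
  show ?case
  proof (cases "X = {}")
    case False
    then obtain a where a: "a \<in> X"
      by blast
    have "even (card (X - {a, mirror N a}))"
      using less card_mirror_closed_Diff_pair[OF less.prems a]
        mirror_closed_Diff_pair[OF less.prems a] by simp
    then show ?thesis
      using card_mirror_closed_Diff_pair[OF less.prems a] by simp
  qed simp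
qed

lemma refl_set_mem_insert_iff:
  assumes "\<Union>M \<subseteq> {1..2*N}" "e \<subseteq> {1..2*N}" "refl_set N e \<notin> M" "f \<in> M"
  shows "refl_set N f \<in> insert e M \<longleftrightarrow> refl_set N f \<in> M"
proof -
  have "f \<subseteq> {1..2*N}"
    using assms(1,4) by blast
  then have "refl_set N f \<noteq> e"
    using assms(2-4) refl_set_eq_iff[of f N e] by auto
  then show ?thesis
    by simp
qed

lemma centered_arcs_insert:
  "centered_arcs N (insert e M) =
     (if refl_set N e = e then insert e (centered_arcs N M) else centered_arcs N M)"
  by (auto simp: centered_arcs_def)

section \<open>Weighted sums over matchings of mirror-closed sets\<close>

text \<open>For \<open>m = 0\<close> and \<open>m = 1\<close> the truncated arguments \<open>m - 1\<close> and \<open>m - 2\<close> are harmless: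
  their coefficients vanish.\<close>

definition matching_recurrence :: "'a \<Rightarrow> 'a \<Rightarrow> 'a \<Rightarrow> (nat \<Rightarrow> 'a :: comm_ring_1) \<Rightarrow> bool" where
  "matching_recurrence r s t w \<longleftrightarrow> w 0 = 1 \<and>
     (\<forall>m. w (Suc m) = (r + 2 * of_nat m * t) * w m + 2 * of_nat m * (s - r * t) * w (m - 1)
                      + 4 * of_nat m * (of_nat m - 1) * t * (t\<^sup>2 - s) * w (m - 2))"

context
  fixes r s t :: "'a :: comm_ring_1" and N :: nat
begin

definition matching_weight :: "nat set set \<Rightarrow> 'a" where
  "matching_weight M = r ^ cnum N M * s ^ pnum N M * t ^ danum N M"

lemma matching_weight_empty [simp]: "matching_weight {} = 1"
  by (simp add: matching_weight_def cnum_def pnum_def danum_def centered_arcs_def coupled_arcs_def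
      asymmetric_arcs_def)

lemma matching_weight_insert_centered:
  assumes "finite M" "\<Union>M \<subseteq> {1..2*N}" "e \<subseteq> {1..2*N}" "e \<notin> M" "refl_set N e = e"
  shows "matching_weight (insert e M) = r * matching_weight M"
proof -
  have iff: "\<forall>f\<in>M. refl_set N f \<in> insert e M \<longleftrightarrow> refl_set N f \<in> M"
    using refl_set_mem_insert_iff assms by metis
  have "centered_arcs N (insert e M) = insert e (centered_arcs N M)"
    using assms(5) by (simp add: centered_arcs_insert)
  moreover have "coupled_arcs N (insert e M) = coupled_arcs N M"
    using iff assms(5) by (auto simp: coupled_arcs_def)
  moreover have "asymmetric_arcs N (insert e M) = asymmetric_arcs N M"
    using iff assms(5) by (auto simp: asymmetric_arcs_def)
  moreover have "e \<notin> centered_arcs N M" "finite (centered_arcs N M)"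
    using assms(1,4) by (auto simp: centered_arcs_def)
  ultimately show ?thesis
    by (simp add: matching_weight_def cnum_def pnum_def danum_def)
qed

lemma matching_weight_insert_asymmetric:
  assumes "finite M" "\<Union>M \<subseteq> {1..2*N}" "e \<subseteq> {1..2*N}" "e \<notin> M"
    "refl_set N e \<noteq> e" "refl_set N e \<notin> M"
  shows "matching_weight (insert e M) = t * matching_weight M"
proof -
  have iff: "\<forall>f\<in>M. refl_set N f \<in> insert e M \<longleftrightarrow> refl_set N f \<in> M"
    using refl_set_mem_insert_iff assms by metis
  have "centered_arcs N (insert e M) = centered_arcs N M"
    using assms(5) by (simp add: centered_arcs_insert)
  moreover have "coupled_arcs N (insert e M) = coupled_arcs N M"
    using iff assms(5,6) by (auto simp: coupled_arcs_def)
  moreover have "asymmetric_arcs N (insert e M) = insert e (asymmetric_arcs N M)"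
    using iff assms(5,6) by (auto simp: asymmetric_arcs_def)
  moreover have "e \<notin> asymmetric_arcs N M" "finite (asymmetric_arcs N M)"
    using assms(1,4) by (auto simp: asymmetric_arcs_def)
  ultimately show ?thesis
    by (simp add: matching_weight_def cnum_def pnum_def danum_def)
qed

lemma matching_weight_insert_coupled:
  assumes "finite M" "\<Union>M \<subseteq> {1..2*N}" "e \<subseteq> {1..2*N}" "e \<notin> M"
    "refl_set N e \<noteq> e" "refl_set N e \<notin> M"
  shows "matching_weight (insert e (insert (refl_set N e) M)) = s * matching_weight M"
proof -
  let ?e' = "refl_set N e"
  have e'e: "refl_set N ?e' = e"
    using refl_set_refl_set[OF assms(3)] .
  have iff: "\<forall>f\<in>M. refl_set N f \<in> insert e (insert ?e' M) \<longleftrightarrow> refl_set N f \<in> M"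
    using refl_set_mem_insert_iff[OF assms(2,3,6)]
      refl_set_mem_insert_iff[OF assms(2) refl_set_subset[OF assms(3)], unfolded e'e] assms(4)
    by blast
  have "refl_set N ?e' \<noteq> ?e'"
    using assms(5) e'e by metis
  then have "centered_arcs N (insert e (insert ?e' M)) = centered_arcs N M"
    using assms(5) by (simp add: centered_arcs_insert)
  moreover have "coupled_arcs N (insert e (insert ?e' M))
      = insert e (insert ?e' (coupled_arcs N M))"
    unfolding coupled_arcs_def using iff assms(5) e'e by blast
  moreover have "asymmetric_arcs N (insert e (insert ?e' M)) = asymmetric_arcs N M"
    unfolding asymmetric_arcs_def using iff e'e by blast
  moreover have "e \<notin> coupled_arcs N M" "?e' \<notin> coupled_arcs N M" "finite (coupled_arcs N M)"
    using assms(1,4,6) by (auto simp: coupled_arcs_def)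
  ultimately show ?thesis
    using assms(5) by (simp add: matching_weight_def cnum_def pnum_def danum_def)
qed

text \<open>If the mirror image of \<open>e\<close> is already an arc of \<open>M\<close>, inserting \<open>e\<close> makes the two
  arcs a coupled pair, and their joint weight changes from \<open>t\<^sup>2\<close> to \<open>s\<close>.\<close>

lemma matching_weight_insert_non_centered:
  assumes "finite M" "\<Union>M \<subseteq> {1..2*N}" "e \<subseteq> {1..2*N}" "e \<notin> M" "refl_set N e \<noteq> e"
  shows "matching_weight (insert e M) = t * matching_weight M
           + (if refl_set N e \<in> M then (s - t\<^sup>2) * matching_weight (M - {refl_set N e}) else 0)"
proof (cases "refl_set N e \<in> M")
  case True
  let ?e' = "refl_set N e" and ?M = "M - {refl_set N e}"
  have M: "M = insert ?e' ?M"
    using True by blast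
  have props: "finite ?M" "\<Union>?M \<subseteq> {1..2*N}" "e \<notin> ?M" "?e' \<notin> ?M"
    using assms by auto
  have e'e: "refl_set N ?e' = e"
    using refl_set_refl_set[OF assms(3)] .
  have "matching_weight (insert e M) = s * matching_weight ?M"
    using matching_weight_insert_coupled[OF props(1,2) assms(3) props(3) assms(5) props(4)] M
    by simp
  moreover have "matching_weight M = t * matching_weight ?M"
    using matching_weight_insert_asymmetric[OF props(1,2) refl_set_subset[OF assms(3)] props(4)]
      e'e assms(5) props(3) M by metis
  ultimately show ?thesis
    using True by (simp add: algebra_simps power2_eq_square)
next
  case False
  then show ?thesis
    using matching_weight_insert_asymmetric[OF assms] by simp
qed

definition matching_weight_sum :: "nat set \<Rightarrow> 'a" where
  "matching_weight_sum X = (\<Sum>M\<in>perfect_matchings_on X. matching_weight M)"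

lemma sum_matching_weight_centered_arc:
  assumes X: "mirror_closed N X" and a: "a \<in> X"
  shows "(\<Sum>M\<in>{M \<in> perfect_matchings_on X. {a, mirror N a} \<in> M}. matching_weight M)
       = r * matching_weight_sum (X - {a, mirror N a})"
proof -
  let ?e = "{a, mirror N a}"
  have range: "X \<subseteq> {1..2*N}" "?e \<subseteq> X"
    using X a by (auto simp: mirror_closed_def)
  have "(\<Sum>M\<in>{M \<in> perfect_matchings_on X. ?e \<in> M}. matching_weight M)
      = (\<Sum>M\<in>perfect_matchings_on (X - ?e). matching_weight ({?e} \<union> M))"
    using sum_perfect_matchings_on_superset[OF finite_mirror_closed[OF X]
        perfect_matching_on_doubleton[OF mirror_neq(2)] range(2)] by simp
  also have "\<dots> = (\<Sum>M\<in>perfect_matchings_on (X - ?e). r * matching_weight M)"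
  proof (rule sum.cong[OF refl])
    fix M
    assume M: "M \<in> perfect_matchings_on (X - ?e)"
    have "refl_set N ?e = ?e" "?e \<subseteq> {1..2*N}"
      using range a by (auto simp: mirror_mirror)
    moreover have "finite M" "\<Union>M \<subseteq> {1..2*N}" "?e \<notin> M"
      using finite_perfect_matching_on[OF _ M] finite_mirror_closed[OF X]
        perfect_matching_on_Union_subset[OF M] range by auto
    ultimately show "matching_weight ({?e} \<union> M) = r * matching_weight M"
      using matching_weight_insert_centered by simp
  qed
  finally show ?thesis
    by (simp add: matching_weight_sum_def sum_distrib_left)
qed

lemma sum_matching_weight_arc:
  assumes Y: "mirror_closed N Y" and u: "u \<in> Y" and v: "v \<in> Y - {u, mirror N u}"
  shows "(\<Sum>M\<in>{M \<in> perfect_matchings_on Y. {u, v} \<in> M}. matching_weight M)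
       = t * matching_weight_sum (Y - {u, v})
         + (s - t\<^sup>2) * matching_weight_sum (Y - {u, mirror N u} - {v, mirror N v})"
proof -
  define Q where "Q = Y - {u, v}"
  let ?e = "{mirror N u, mirror N v}"
  have range: "Y \<subseteq> {1..2*N}" "u \<in> {1..2*N}" "v \<in> {1..2*N}"
    using Y u v by (auto simp: mirror_closed_def)
  have mem: "mirror N u \<in> Y" "mirror N v \<in> Y"
    using Y u v by (auto simp: mirror_closed_def)
  have distinct: "mirror N u \<notin> {u, v}" "mirror N v \<notin> {u, v}" "mirror N u \<noteq> mirror N v" "u \<noteq> v"
    using v mirror_notin_pair[OF range(2,3)] by auto
  have fin: "finite Y" "finite Q"
    using finite_mirror_closed[OF Y] by (simp_all add: Q_def)
  have "(\<Sum>M\<in>{M \<in> perfect_matchings_on Y. {u, v} \<in> M}. matching_weight M)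
      = (\<Sum>M\<in>perfect_matchings_on Q. matching_weight (insert {u, v} M))"
    using sum_perfect_matchings_on_superset[OF fin(1) perfect_matching_on_doubleton[OF distinct(4)]]
      u v by (simp add: Q_def)
  also have "\<dots> = (\<Sum>M\<in>perfect_matchings_on Q. t * matching_weight M
                      + (if ?e \<in> M then (s - t\<^sup>2) * matching_weight (M - {?e}) else 0))"
  proof (rule sum.cong[OF refl])
    fix M
    assume M: "M \<in> perfect_matchings_on Q"
    have "finite M" "\<Union>M \<subseteq> {1..2*N}" "{u, v} \<subseteq> {1..2*N}" "{u, v} \<notin> M"
      using finite_perfect_matching_on[OF fin(2) M] perfect_matching_on_Union_subset[OF M] range
      by (auto simp: Q_def)
    moreover have "refl_set N {u, v} \<noteq> {u, v}"
      using distinct by auto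
    ultimately show "matching_weight (insert {u, v} M) = t * matching_weight M
        + (if ?e \<in> M then (s - t\<^sup>2) * matching_weight (M - {?e}) else 0)"
      using matching_weight_insert_non_centered by simp
  qed
  also have "\<dots> = t * matching_weight_sum Q
      + (\<Sum>M\<in>perfect_matchings_on Q. if ?e \<in> M then (s - t\<^sup>2) * matching_weight (M - {?e}) else 0)"
    by (simp add: matching_weight_sum_def sum.distrib sum_distrib_left)
  also have "(\<Sum>M\<in>perfect_matchings_on Q.
                if ?e \<in> M then (s - t\<^sup>2) * matching_weight (M - {?e}) else 0)
      = (s - t\<^sup>2) * (\<Sum>M\<in>{M \<in> perfect_matchings_on Q. {?e} \<subseteq> M}. matching_weight (M - {?e}))"
    using finite_perfect_matchings_on[OF fin(2)]
    by (simp add: sum.inter_filter sum_distrib_left if_distrib cong: if_cong)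
  also have "(\<Sum>M\<in>{M \<in> perfect_matchings_on Q. {?e} \<subseteq> M}. matching_weight (M - {?e}))
      = (\<Sum>M\<in>perfect_matchings_on (Q - ?e). matching_weight ({?e} \<union> M - {?e}))"
    by (rule sum_perfect_matchings_on_superset[OF fin(2)
          perfect_matching_on_doubleton[OF distinct(3)]]) (use mem distinct in \<open>auto simp: Q_def\<close>)
  also have "\<dots> = matching_weight_sum (Q - ?e)"
    unfolding matching_weight_sum_def
  proof (rule sum.cong[OF refl])
    fix M
    assume "M \<in> perfect_matchings_on (Q - ?e)"
    then have "?e \<notin> M"
      using perfect_matching_on_Union_subset by blast
    then show "matching_weight ({?e} \<union> M - {?e}) = matching_weight M"
      by simp
  qed
  also have "Q - ?e = Y - {u, mirror N u} - {v, mirror N v}"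
    by (auto simp: Q_def)
  finally show ?thesis
    by (simp add: Q_def)
qed

lemma sum_matching_weight_two_arcs:
  assumes X: "mirror_closed N X" and a: "a \<in> X" and u: "u \<in> X - {a, mirror N a}"
    and v: "v \<in> X - {a, mirror N a} - {u}"
  shows "(\<Sum>M\<in>{M \<in> perfect_matchings_on X. {a, u} \<in> M \<and> {mirror N a, v} \<in> M}. matching_weight M)
       = (if v = mirror N u then s else t\<^sup>2) * matching_weight_sum (X - {a, mirror N a} - {u, v})"
proof -
  define Q where "Q = X - {a, mirror N a} - {u, v}"
  let ?a' = "mirror N a" and ?u' = "mirror N u"
  have range: "X \<subseteq> {1..2*N}" "{a, u} \<subseteq> {1..2*N}" "{?a', v} \<subseteq> {1..2*N}"
    using X a u v by (auto simp: mirror_closed_def)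
  have mem: "?a' \<in> X"
    using X a by (auto simp: mirror_closed_def)
  have u': "?u' \<notin> {a, ?a'}"
    using mirror_notin_pair[of a N u] range u by auto
  have fin: "finite X" "finite Q"
    using finite_mirror_closed[OF X] by (simp_all add: Q_def)
  have E: "{{a, u}, {?a', v}} \<in> perfect_matchings_on {a, u, ?a', v}"
    using perfect_matching_on_insert[OF perfect_matching_on_doubleton, of ?a' v a u] u v by auto
  have B: "{a, u, ?a', v} \<subseteq> X" "Q = X - {a, u, ?a', v}"
    using a u v mem by (auto simp: Q_def)
  have "(\<Sum>M\<in>{M \<in> perfect_matchings_on X. {a, u} \<in> M \<and> {?a', v} \<in> M}. matching_weight M)
      = (\<Sum>M\<in>{M \<in> perfect_matchings_on X. {{a, u}, {?a', v}} \<subseteq> M}. matching_weight M)"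
    by simp
  also have "\<dots> = (\<Sum>M\<in>perfect_matchings_on Q. matching_weight ({{a, u}, {?a', v}} \<union> M))"
    unfolding B(2) by (rule sum_perfect_matchings_on_superset[OF fin(1) E B(1)])
  also have "\<dots> = (\<Sum>M\<in>perfect_matchings_on Q. (if v = ?u' then s else t\<^sup>2) * matching_weight M)"
  proof (rule sum.cong[OF refl])
    fix M
    assume M: "M \<in> perfect_matchings_on Q"
    have M_props: "finite M" "\<Union>M \<subseteq> {1..2*N}" "\<Union>M \<subseteq> Q"
      using finite_perfect_matching_on[OF fin(2) M] perfect_matching_on_Union_subset[OF M] range
      by (auto simp: Q_def)
    have out: "\<And>x. {a, x} \<notin> M" "\<And>x. {?a', x} \<notin> M"
      using M_props(3) by (auto simp: Q_def)
    have "matching_weight (insert {?a', v} M) = t * matching_weight M"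
    proof -
      have "refl_set N {?a', v} = {a, mirror N v}"
        using range by (simp add: mirror_mirror)
      moreover have "{a, mirror N v} \<noteq> {?a', v}"
        using v by (auto simp: doubleton_eq_iff)
      ultimately show ?thesis
        using matching_weight_insert_non_centered[OF M_props(1,2) range(3) out(2)] out(1) by simp
    qed
    moreover have "matching_weight (insert {a, u} (insert {?a', v} M))
        = t * matching_weight (insert {?a', v} M)
          + (if v = ?u' then (s - t\<^sup>2) * matching_weight M else 0)"
    proof -
      let ?M = "insert {?a', v} M"
      have "{a, u} \<notin> ?M" "refl_set N {a, u} \<noteq> {a, u}" "finite ?M" "\<Union>?M \<subseteq> {1..2*N}"
        using out(1) u v M_props range by (auto simp: doubleton_eq_iff)
      then have eq: "matching_weight (insert {a, u} ?M) = t * matching_weight ?M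
          + (if refl_set N {a, u} \<in> ?M
             then (s - t\<^sup>2) * matching_weight (?M - {refl_set N {a, u}}) else 0)"
        using matching_weight_insert_non_centered range(2) by blast
      have iff: "refl_set N {a, u} \<in> ?M \<longleftrightarrow> v = ?u'"
        using out(2) u' v by (auto simp: doubleton_eq_iff)
      have diff: "?M - {{?a', v}} = M"
        using out(2) by auto
      show ?thesis
      proof (cases "v = ?u'")
        case True
        then show ?thesis
          using eq iff diff by simp
      next
        case False
        then show ?thesis
          using eq iff by simp
      qed
    qed
    ultimately show "matching_weight ({{a, u}, {?a', v}} \<union> M)
        = (if v = ?u' then s else t\<^sup>2) * matching_weight M"
      by (simp add: algebra_simps power2_eq_square)
  qed
  finally show ?thesis
    by (simp add: Q_def matching_weight_sum_def sum_distrib_left)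
qed

lemma matching_weight_sum_by_partner:
  assumes X: "mirror_closed N X" and a: "a \<in> X"
  shows "matching_weight_sum X = r * matching_weight_sum (X - {a, mirror N a})
           + (\<Sum>u\<in>X - {a, mirror N a}.
                \<Sum>M\<in>{M \<in> perfect_matchings_on X. {a, u} \<in> M}. matching_weight M)"
proof -
  have fin: "finite X"
    using finite_mirror_closed[OF X] .
  have "X - {a} = insert (mirror N a) (X - {a, mirror N a})"
    using X a by (auto simp: mirror_closed_def)
  then have "matching_weight_sum X
      = (\<Sum>M\<in>{M \<in> perfect_matchings_on X. {a, mirror N a} \<in> M}. matching_weight M)
        + (\<Sum>u\<in>X - {a, mirror N a}.
             \<Sum>M\<in>{M \<in> perfect_matchings_on X. {a, u} \<in> M}. matching_weight M)"
    unfolding matching_weight_sum_def sum_perfect_matchings_on_by_partner[OF fin a order_refl]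
    using fin by simp
  then show ?thesis
    using sum_matching_weight_centered_arc[OF X a] by simp
qed

lemma sum_matching_weight_arc_by_mirror_partner:
  assumes X: "mirror_closed N X" and a: "a \<in> X" and u: "u \<in> X - {a, mirror N a}"
  shows "(\<Sum>M\<in>{M \<in> perfect_matchings_on X. {a, u} \<in> M}. matching_weight M)
       = s * matching_weight_sum (X - {a, mirror N a} - {u, mirror N u})
         + t\<^sup>2 * (\<Sum>v\<in>X - {a, mirror N a} - {u, mirror N u}.
                       matching_weight_sum (X - {a, mirror N a} - {u, v}))"
proof -
  let ?a' = "mirror N a" and ?u' = "mirror N u" and ?Y = "X - {a, mirror N a}"
  let ?S = "{M \<in> perfect_matchings_on X. {a, u} \<in> M}"
  let ?f = "\<lambda>v. \<Sum>M\<in>{M \<in> ?S. {?a', v} \<in> M}. matching_weight M"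
  have fin: "finite X"
    using finite_mirror_closed[OF X] .
  have a': "?a' \<in> X"
    using X a by (auto simp: mirror_closed_def)
  have range: "a \<in> {1..2*N}" "u \<in> {1..2*N}"
    using X a u by (auto simp: mirror_closed_def)
  have u': "?u' \<in> ?Y - {u}"
    using X u mirror_notin_pair[OF range] by (auto simp: mirror_closed_def)
  have "sum matching_weight ?S = (\<Sum>v\<in>X - {?a'}. ?f v)"
    by (rule sum_perfect_matchings_on_by_partner[OF fin a']) blast
  also have "\<dots> = (\<Sum>v\<in>?Y - {u}. ?f v)"
  proof (rule sum.mono_neutral_right)
    show "\<forall>v\<in>(X - {?a'}) - (?Y - {u}). ?f v = 0"
    proof
      fix v
      assume v: "v \<in> (X - {?a'}) - (?Y - {u})"
      have empty: "{M \<in> ?S. {?a', v} \<in> M} = {}"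
      proof (intro equals0I)
        fix M
        assume M: "M \<in> {M \<in> ?S. {?a', v} \<in> M}"
        then have "{a, u} = {?a', v}"
          using v perfect_matching_on_arc_unique[of M X "{a, u}" "{?a', v}"] by blast
        then show False
          using u v by (auto simp: doubleton_eq_iff)
      qed
      show "?f v = 0"
        unfolding empty by simp
    qed
  qed (use fin u in auto)
  also have "\<dots> = (\<Sum>v\<in>?Y - {u}. (if v = ?u' then s else t\<^sup>2) * matching_weight_sum (?Y - {u, v}))"
    by (rule sum.cong[OF refl])
      (use sum_matching_weight_two_arcs[OF X a u] in \<open>simp add: conj_assoc\<close>)
  also have "?Y - {u} = insert ?u' (?Y - {u, ?u'})"
    using u' by auto
  finally show ?thesis
    using fin by (simp add: sum_distrib_left)
qed

text \<open>The sets \<open>X - {a, a'} - {u, v}\<close> in \<open>sum_matching_weight_arc_by_mirror_partner\<close> are not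
  mirror-closed; decomposing \<open>X - {a, a'}\<close> at \<open>u\<close> (\<open>sum_matching_weight_arc\<close>) eliminates them.\<close>

lemma sum_matching_weight_non_centered_arc:
  assumes X: "mirror_closed N X" and a: "a \<in> X" and u: "u \<in> X - {a, mirror N a}"
  defines "Y \<equiv> X - {a, mirror N a}" and "Z \<equiv> X - {a, mirror N a} - {u, mirror N u}"
  shows "(\<Sum>M\<in>{M \<in> perfect_matchings_on X. {a, u} \<in> M}. matching_weight M)
       = s * matching_weight_sum Z + t * (matching_weight_sum Y - r * matching_weight_sum Z
           - (s - t\<^sup>2) * (\<Sum>v\<in>Z. matching_weight_sum (Z - {v, mirror N v})))"
proof -
  have Y: "mirror_closed N Y" and uY: "u \<in> Y" and Z: "Z = Y - {u, mirror N u}"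
    using mirror_closed_Diff_pair[OF X a] u by (simp_all add: Y_def Z_def)
  have "matching_weight_sum Y
      = r * matching_weight_sum Z + t * (\<Sum>v\<in>Z. matching_weight_sum (Y - {u, v}))
        + (s - t\<^sup>2) * (\<Sum>v\<in>Z. matching_weight_sum (Z - {v, mirror N v}))"
    using matching_weight_sum_by_partner[OF Y uY] sum_matching_weight_arc[OF Y uY]
    by (simp add: Z sum.distrib sum_distrib_left)
  then show ?thesis
    using sum_matching_weight_arc_by_mirror_partner[OF X a u] unfolding Y_def Z_def
    by (simp add: algebra_simps power2_eq_square)
qed

lemma card_div2_mirror_closed_Diff_pair:
  "mirror_closed N X \<Longrightarrow> a \<in> X \<Longrightarrow> card (X - {a, mirror N a}) div 2 = card X div 2 - 1"
  using card_mirror_closed_Diff_pair[of N X a] by simp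

lemma matching_weight_sum_step:
  assumes w: "matching_recurrence r s t w" and X: "mirror_closed N X" and a: "a \<in> X"
    and smaller: "\<And>V. mirror_closed N V \<Longrightarrow> V \<subseteq> X - {a, mirror N a}
                    \<Longrightarrow> matching_weight_sum V = w (card V div 2)"
  shows "matching_weight_sum X = w (card X div 2)"
proof -
  define Y where "Y = X - {a, mirror N a}"
  define m where "m = card Y div 2"
  define Z where "Z u = Y - {u, mirror N u}" for u
  have Y: "mirror_closed N Y"
    using mirror_closed_Diff_pair[OF X a] by (simp add: Y_def)
  have IH: "matching_weight_sum V = w (card V div 2)" if "mirror_closed N V" "V \<subseteq> Y" for V
    using smaller that by (simp add: Y_def)
  have card_Y: "card Y = 2 * m"
    using even_card_mirror_closed[OF Y] by (simp add: m_def)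
  have Z: "mirror_closed N (Z u)" "Z u \<subseteq> Y" "of_nat (card (Z u)) = of_nat (card Y) - (2 :: 'a)"
    if "u \<in> Y" for u
    using mirror_closed_Diff_pair[OF Y that] card_mirror_closed_Diff_pair[OF Y that]
    by (auto simp: Z_def)
  have WZ: "matching_weight_sum (Z u) = w (m - 1)" if "u \<in> Y" for u
    using IH[OF Z(1,2)[OF that]] card_div2_mirror_closed_Diff_pair[OF Y that]
    by (simp add: Z_def m_def)
  have WZv: "matching_weight_sum (Z u - {v, mirror N v}) = w (m - 2)" if "u \<in> Y" "v \<in> Z u" for u v
  proof -
    have "mirror_closed N (Z u - {v, mirror N v})" "Z u - {v, mirror N v} \<subseteq> Y"
      using mirror_closed_Diff_pair[OF Z(1)[OF that(1)] that(2)] Z(2)[OF that(1)] by auto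
    moreover have "card (Z u - {v, mirror N v}) div 2 = m - 2"
      using card_div2_mirror_closed_Diff_pair[OF Z(1)[OF that(1)] that(2)]
        card_div2_mirror_closed_Diff_pair[OF Y that(1)] by (simp add: Z_def m_def numeral_2_eq_2)
    ultimately show ?thesis
      using IH by simp
  qed
  have "matching_weight_sum X = r * matching_weight_sum Y
      + (\<Sum>u\<in>Y. s * matching_weight_sum (Z u)
           + t * (matching_weight_sum Y - r * matching_weight_sum (Z u)
                  - (s - t\<^sup>2) * (\<Sum>v\<in>Z u. matching_weight_sum (Z u - {v, mirror N v}))))"
    using matching_weight_sum_by_partner[OF X a] sum_matching_weight_non_centered_arc[OF X a]
    by (simp add: Y_def Z_def)
  also have "\<dots> = r * w m + of_nat (card Y) * (s * w (m - 1)
      + t * (w m - r * w (m - 1) - (s - t\<^sup>2) * ((of_nat (card Y) - 2) * w (m - 2))))"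
    using IH[OF Y order_refl] WZ WZv Z(3) by (simp add: m_def cong: sum.cong)
  also have "\<dots> = w (Suc m)"
    using w card_Y unfolding matching_recurrence_def by (simp add: algebra_simps)
  finally show ?thesis
    using card_mirror_closed_Diff_pair[OF X a] card_Y by (simp add: Y_def)
qed

lemma matching_weight_sum_eq_recurrence:
  assumes w: "matching_recurrence r s t w" and X: "mirror_closed N X"
  shows "matching_weight_sum X = w (card X div 2)"
  using X
proof (induction "card X" arbitrary: X rule: less_induct)
  case less
  show ?case
  proof (cases "X = {}")
    case True
    then show ?thesis
      using w by (simp add: matching_weight_sum_def matching_recurrence_def)
  next
    case False
    then obtain a where a: "a \<in> X"
      by blast
    show ?thesis
    proof (rule matching_weight_sum_step[OF w less.prems a])
      fix V
      assume V: "mirror_closed N V" "V \<subseteq> X - {a, mirror N a}"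
      then have "card V < card X"
        using a finite_mirror_closed[OF less.prems] by (intro psubset_card_mono) auto
      then show "matching_weight_sum V = w (card V div 2)"
        using less.hyps V(1) by blast
    qed
  qed
qed

end

section \<open>The exponential generating function\<close>

lemma fps_binomial_ode:
  "(1 + fps_X) * fps_deriv (fps_binomial a) = fps_const a * fps_binomial (a :: 'a :: field_char_0)"
proof -
  have "subdegree (1 + fps_X :: 'a fps) = 0"
    by (simp add: subdegree_eq_0_iff)
  moreover have "(1 + fps_X :: 'a fps) \<noteq> 0"
    by (metis fps_add_nth fps_one_nth fps_X_nth fps_zero_nth add.right_neutral zero_neq_one)
  ultimately show ?thesis
    unfolding fps_binomial_deriv by (simp add: fps_divide_times_eq mult.commute)
qed

lemma fps_binomial_compose_linear_ode:
  fixes a c :: "'a :: field_char_0"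
  defines "B \<equiv> fps_binomial a oo (fps_const c * fps_X)"
  shows "(1 + fps_const c * fps_X) * fps_deriv B = fps_const (a * c) * B"
proof -
  let ?y = "fps_const c * fps_X"
  have y0: "?y $ 0 = 0" by simp
  have "(1 + ?y) * (fps_deriv (fps_binomial a) oo ?y)
      = ((1 + fps_X) * fps_deriv (fps_binomial a)) oo ?y"
    by (simp only: fps_compose_mult_distrib[OF y0] fps_compose_add_distrib fps_compose_1
        fps_X_fps_compose_startby0[OF y0])
  also have "\<dots> = fps_const a * B"
    by (simp only: fps_binomial_ode B_def fps_compose_mult_distrib[OF y0] fps_const_compose)
  finally have "(1 + ?y) * (fps_deriv (fps_binomial a) oo ?y) = fps_const a * B" .
  moreover have "fps_deriv B = (fps_deriv (fps_binomial a) oo ?y) * fps_const c"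
    unfolding B_def fps_compose_deriv[OF y0] by simp
  ultimately show ?thesis
    by (metis (no_types, lifting) fps_const_mult mult.assoc mult.commute)
qed

definition matching_egf :: "'a \<Rightarrow> 'a \<Rightarrow> 'a \<Rightarrow> 'a :: field_char_0 fps" where
  "matching_egf r s t = fps_exp (r - t) * (fps_exp (s - t\<^sup>2) oo fps_X\<^sup>2)
     * (fps_binomial (- 1/2) oo (fps_const (- 2 * t) * fps_X))"

lemma matching_egf_ode:
  "(1 - fps_const (2 * t) * fps_X) * fps_deriv (matching_egf r s t)
     = (fps_const r + fps_const (2 * (s - r * t)) * fps_X + fps_const (4 * t * (t\<^sup>2 - s)) * fps_X\<^sup>2)
       * matching_egf r s t"
proof -
  define E1 where "E1 = fps_exp (r - t)"
  define E2 where "E2 = fps_exp (s - t\<^sup>2) oo fps_X\<^sup>2"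
  define B where "B = fps_binomial (- 1/2) oo (fps_const (- 2 * t) * fps_X)"
  define L where "L = 1 - fps_const (2 * t) * fps_X"
  have F: "matching_egf r s t = E1 * E2 * B"
    by (simp add: matching_egf_def E1_def E2_def B_def)
  have dE1: "fps_deriv E1 = fps_const (r - t) * E1"
    by (simp add: E1_def)
  have dE2: "fps_deriv E2 = 2 * fps_const (s - t\<^sup>2) * fps_X * E2"
  proof -
    have "fps_deriv E2
        = (fps_const (s - t\<^sup>2) * (fps_exp (s - t\<^sup>2) oo fps_X\<^sup>2)) * fps_deriv (fps_X\<^sup>2)"
      unfolding E2_def by (simp add: fps_compose_deriv fps_compose_mult_distrib)
    then show ?thesis
      by (simp add: E2_def fps_deriv_power numeral_2_eq_2 algebra_simps)
  qed
  have dB: "L * fps_deriv B = fps_const t * B"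
    using fps_binomial_compose_linear_ode[where a = "- 1/2" and c = "- 2 * t"]
    by (simp add: L_def B_def flip: fps_const_neg)
  have "L * fps_deriv (matching_egf r s t)
      = (fps_deriv E1 * E2 + E1 * fps_deriv E2) * B * L + E1 * E2 * (L * fps_deriv B)"
    by (simp add: F algebra_simps)
  also have "\<dots>
      = (fps_const (r - t) * L + 2 * fps_const (s - t\<^sup>2) * fps_X * L + fps_const t) * (E1 * E2 * B)"
    by (simp add: dE1 dE2 dB algebra_simps)
  also have "fps_const (r - t) * L + 2 * fps_const (s - t\<^sup>2) * fps_X * L + fps_const t
      = fps_const r + fps_const (2 * (s - r * t)) * fps_X + fps_const (4 * t * (t\<^sup>2 - s)) * fps_X\<^sup>2"
  proof -
    have "fps_const (2::'a) * fps_const 2 = fps_const 4"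
      by simp
    then show ?thesis
      by (simp add: L_def algebra_simps power2_eq_square numeral_fps_const
          flip: fps_const_mult fps_const_add fps_const_neg fps_const_sub)
  qed
  finally show ?thesis
    by (simp add: F L_def)
qed

lemma matching_egf_nth_Suc:
  fixes r s t :: "'a :: field_char_0"
  defines "F \<equiv> matching_egf r s t"
  shows "of_nat (Suc m) * F $ Suc m
      = (r + 2 * t * of_nat m) * F $ m + (if m = 0 then 0 else 2 * (s - r * t) * F $ (m - 1))
        + (if m < 2 then 0 else 4 * t * (t\<^sup>2 - s) * F $ (m - 2))"
proof -
  have ode: "(1 - fps_const (2 * t) * fps_X) * fps_deriv F
      = (fps_const r + fps_const (2 * (s - r * t)) * fps_X
         + fps_const (4 * t * (t\<^sup>2 - s)) * fps_X\<^sup>2) * F"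
    unfolding F_def by (rule matching_egf_ode)
  have lhs: "((1 - fps_const (2 * t) * fps_X) * fps_deriv F) $ m
      = of_nat (Suc m) * F $ Suc m - 2 * t * of_nat m * F $ m"
    by (cases m) (simp_all add: algebra_simps)
  have rhs: "((fps_const r + fps_const (2 * (s - r * t)) * fps_X
                + fps_const (4 * t * (t\<^sup>2 - s)) * fps_X\<^sup>2) * F) $ m
      = r * F $ m + (if m = 0 then 0 else 2 * (s - r * t) * F $ (m - 1))
        + (if m < 2 then 0 else 4 * t * (t\<^sup>2 - s) * F $ (m - 2))"
    by (simp add: distrib_right mult.assoc fps_X_power_mult_nth)
  have "of_nat (Suc m) * F $ Suc m - 2 * t * of_nat m * F $ m
      = r * F $ m + (if m = 0 then 0 else 2 * (s - r * t) * F $ (m - 1))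
        + (if m < 2 then 0 else 4 * t * (t\<^sup>2 - s) * F $ (m - 2))"
    unfolding lhs[symmetric] rhs[symmetric] ode ..
  then show ?thesis
    by (simp add: algebra_simps)
qed

lemma matching_recurrence_egf:
  "matching_recurrence r s t (\<lambda>m. fact m * matching_egf r s t $ m)"
  unfolding matching_recurrence_def
proof (intro conjI allI)
  let ?F = "matching_egf r s t"
  show "fact 0 * ?F $ 0 = 1"
    by (simp add: matching_egf_def)
  fix m
  consider "m = 0" | "m = 1" | k where "m = Suc (Suc k)"
    by (metis One_nat_def not0_implies_Suc)
  then show "fact (Suc m) * ?F $ Suc m
      = (r + 2 * of_nat m * t) * (fact m * ?F $ m)
        + 2 * of_nat m * (s - r * t) * (fact (m - 1) * ?F $ (m - 1))
        + 4 * of_nat m * (of_nat m - 1) * t * (t\<^sup>2 - s) * (fact (m - 2) * ?F $ (m - 2))"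
  proof cases
    case 3
    have "fact (Suc m) * ?F $ Suc m = fact m * (of_nat (Suc m) * ?F $ Suc m)"
      by (simp only: fact_Suc mult_ac)
    also have "\<dots> = fact m * ((r + 2 * t * of_nat m) * ?F $ m + 2 * (s - r * t) * ?F $ (m - 1)
                                + 4 * t * (t\<^sup>2 - s) * ?F $ (m - 2))"
      using matching_egf_nth_Suc[of m r s t] 3 by simp
    also have "\<dots> = (r + 2 * of_nat m * t) * (fact m * ?F $ m)
                    + 2 * (s - r * t) * (fact m * ?F $ (m - 1))
                    + 4 * t * (t\<^sup>2 - s) * (fact m * ?F $ (m - 2))"
      by (simp add: algebra_simps)
    also have "fact m * ?F $ (m - 1) = of_nat m * (fact (m - 1) * ?F $ (m - 1))"
      using 3 by simp
    also have "fact m * ?F $ (m - 2) = of_nat m * (of_nat m - 1) * (fact (m - 2) * ?F $ (m - 2))"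
      using 3 by (simp add: algebra_simps)
    finally show ?thesis
      by (simp add: algebra_simps)
  qed (use matching_egf_nth_Suc[of m r s t] in \<open>simp_all add: numeral_2_eq_2\<close>)
qed

theorem theorem5p1:
  fixes r s t :: real
  shows "Abs_fps (\<lambda>n. (\<Sum>M\<in>perfect_matchings n.
              r ^ cnum n M * s ^ pnum n M * t ^ danum n M) / fact n)
         = fps_exp (r - t) * (fps_exp (s - t\<^sup>2) oo fps_X\<^sup>2)
           * (fps_binomial (- 1/2) oo (fps_const (- 2 * t) * fps_X))"
proof -
  have "(\<Sum>M\<in>perfect_matchings n. r ^ cnum n M * s ^ pnum n M * t ^ danum n M)
      = fact n * matching_egf r s t $ n" for n
  proof -
    have "(\<Sum>M\<in>perfect_matchings n. r ^ cnum n M * s ^ pnum n M * t ^ danum n M)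
        = matching_weight_sum r s t n {1..2*n}"
      by (simp add: matching_weight_sum_def matching_weight_def perfect_matchings_eq_on)
    also have "\<dots> = fact n * matching_egf r s t $ n"
      using matching_weight_sum_eq_recurrence[OF matching_recurrence_egf mirror_closed_range]
      by simp
    finally show ?thesis .
  qed
  then show ?thesis
    by (simp add: fps_eq_iff matching_egf_def)
qed

end
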